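(* Let $\kappa$ be a regular infinite cardinal and $\mu$ a singular cardinal with $\mathrm{cf}(\mu)=\kappa$. (1) If $\lambda$ is a cardinal with $\lambda<2^\lambda<\mu$, then $\lambda<\mathrm{non}(\mathcal M_\kappa({}^{\mu}2,\kappa))$. Consequently, if $\mu$ is a strong limit cardinal, then $\mu^+\le\mathrm{non}(\mathcal M_\kappa({}^{\mu}2,\kappa))$. (2) If $\lambda$ is a regular cardinal with $\kappa<\lambda<\mu\le 2^\lambda$ and there exists a ${<}\kappa^+$-independent family $\mathcal X\subseteq[\lambda]^\lambda$ of cardinality $\mu$, then $\mathrm{non}(\mathcal M_\kappa({}^{\mu}2,\kappa))\le\lambda$.
   Context: For ordinals $\delta,\rho$, ${}^{\delta}\rho$ is the set of functions $\delta\to\rho$; for a partial function $s\colon\delta\rightharpoonup\rho$, $[s]=\{f\in{}^{\delta}\rho: s\subseteq f\}$. The ${<}\kappa$-box topology on ${}^{\delta}\rho$ has base $\{[s]: |\mathrm{dom}(s)|<\kappa\}$; $(X,\kappa)$ denotes $X$ with it. A set is $\kappa$-meagre if it is a union of at most $\kappa$ nowhere dense sets; $\mathcal M_\kappa(X,\tau)$ is the ideal of $\kappa$-meagre subsets; $\mathrm{non}(\mathcal I)$ is the least size of a subset of the space not in $\mathcal I$. For a regular cardinal $\lambda$, a family $\mathcal X\subseteq[\lambda]^\lambda$ is ${<}\nu$-independent if for all disjoint $A,B\in[\mathcal X]^{<\nu}$ we have $|\bigcap A\setminus\bigcup B|=\lambda$. *)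

theory Defs
  imports "HOL-Analysis.Analysis"
begin

unbundle cardinal_syntax

definition cyl :: "('m \<rightharpoonup> bool) \<Rightarrow> ('m \<Rightarrow> bool) set" where
  "cyl s = {f. \<forall>x \<in> dom s. s x = Some (f x)}"

text \<open>The <kappa-box topology on the space of all functions 'm \<Rightarrow> bool (i.e. on ^mu 2,
  where mu = |UNIV :: 'm set|), with kappa given as the cardinality of the set K:
  generated by the base of all [s] with |dom s| < kappa.\<close>
definition box_top :: "'k set \<Rightarrow> ('m \<Rightarrow> bool) topology" where
  "box_top K = topology_generated_by {cyl s | s. |dom s| <o |K|}"

definition nowhere_dense_in :: "'a topology \<Rightarrow> 'a set \<Rightarrow> bool" where
  "nowhere_dense_in X A \<longleftrightarrow> A \<subseteq> topspace X \<and> X interior_of (X closure_of A) = {}"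

definition kmeagre :: "'k set \<Rightarrow> 'a topology \<Rightarrow> 'a set \<Rightarrow> bool" where
  "kmeagre K X A \<longleftrightarrow> (\<exists>\<N>. |\<N>| \<le>o |K| \<and> (\<forall>N \<in> \<N>. nowhere_dense_in X N) \<and> A = \<Union>\<N>)"

definition cof_is :: "'a rel \<Rightarrow> 'c set \<Rightarrow> bool" where
  "cof_is r C \<longleftrightarrow> (\<exists>A. A \<subseteq> Field r \<and> cofinal A r \<and> |A| =o |C| ) \<and>
                   (\<forall>A. A \<subseteq> Field r \<and> cofinal A r \<longrightarrow> |C| \<le>o |A| )"

end

theory Submission
  imports Defs
begin

text \<open>A set of size \<lambda> with 2^\<lambda> < \<mu> is nowhere dense in the <\<kappa>-box topology: a basic
  set [s] with |dom s| < \<kappa> leaves \<mu> coordinates free, and by pigeonhole two free coordinates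
  a, b are not separated by any of its points, so [s \<union> {a \<mapsto> 1, b \<mapsto> 0}] \<subseteq> [s] misses it.
  If \<mu> is a strong limit, a set of size \<mu> is split along a cofinal subset of \<mu> of size
  \<kappa> = cf \<mu> into \<kappa> sets of size < \<mu>.

  For the upper bound, regularity of \<kappa> lets one meet \<kappa> nowhere dense sets one after the
  other along a chain of \<kappa> conditions (a fusion argument), so the complement of a \<kappa>-meagre set
  contains some [P] with |P| \<le> \<kappa>. For an independent family {X_\<alpha> : \<alpha> < \<mu>} the set
  Y = {(\<alpha> \<mapsto> [\<xi> \<in> X_\<alpha>]) : \<xi> < \<lambda>} meets every such [P], because P only asks \<xi> to lie in at
  most \<kappa> of the X_\<alpha> and outside at most \<kappa> others; so Y is not \<kappa>-meagre.\<close>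

text \<open>Conditions are relations rather than partial maps, so that a chain of conditions is glued
  by its union; cylinder P is the paper's basic set [P].\<close>

definition cylinder :: "('a \<times> 'b) set \<Rightarrow> ('a \<Rightarrow> 'b) set" where
  "cylinder P = {g. \<forall>x b. (x, b) \<in> P \<longrightarrow> g x = b}"

lemma cylinder_antimono: "P \<subseteq> Q \<Longrightarrow> cylinder Q \<subseteq> cylinder P"
  unfolding cylinder_def by blast

lemma cylinder_Un: "cylinder (P \<union> Q) = cylinder P \<inter> cylinder Q"
  unfolding cylinder_def by fast

lemma cyl_eq_cylinder_graph: "cyl s = cylinder (Map.graph s)"
  unfolding cyl_def cylinder_def graph_def dom_def by (auto simp del: split_paired_All)

lemma cylinder_nonempty_iff: "cylinder P \<noteq> {} \<longleftrightarrow> single_valued P"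
proof
  assume "cylinder P \<noteq> {}"
  then obtain g where g: "\<And>x b. (x, b) \<in> P \<Longrightarrow> g x = b" unfolding cylinder_def by blast
  show "single_valued P"
  proof (rule single_valuedI)
    fix x y z assume "(x, y) \<in> P" "(x, z) \<in> P"
    then show "y = z" using g by metis
  qed
next
  assume "single_valued P"
  then have "(\<lambda>x. THE b. (x, b) \<in> P) \<in> cylinder P"
    unfolding cylinder_def by (auto dest: single_valuedD)
  then show "cylinder P \<noteq> {}" by blast
qed

lemma cylinder_insert: "cylinder (insert (x, b) P) = {g. g x = b} \<inter> cylinder P"
  unfolding cylinder_def by blast

lemma card_of_Domain_ordLeq: "|Domain P| \<le>o |P|"
  using card_of_image[of fst P] by (simp add: fst_eq_Domain)

lemma single_valued_Union_chain:
  assumes "\<And>P. P \<in> \<P> \<Longrightarrow> single_valued P" and "\<And>P Q. P \<in> \<P> \<Longrightarrow> Q \<in> \<P> \<Longrightarrow> P \<subseteq> Q \<or> Q \<subseteq> P"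
  shows "single_valued (\<Union>\<P>)"
proof (rule single_valuedI)
  fix x y z assume "(x, y) \<in> \<Union>\<P>" "(x, z) \<in> \<Union>\<P>"
  then obtain P Q where "P \<in> \<P>" "Q \<in> \<P>" "(x, y) \<in> P" "(x, z) \<in> Q" by blast
  with assms show "y = z" by (metis single_valuedD subsetD)
qed

lemma openin_box_top_cylinder:
  assumes "|P| <o |K|"
  shows "openin (box_top K) (cylinder P)"
proof (cases "cylinder P = {}")
  case False
  then obtain g where g: "g \<in> cylinder P" by blast
  let ?s = "\<lambda>x. if x \<in> Domain P then Some (g x) else None"
  have "Map.graph ?s = P"
    using g by (auto simp: graph_def cylinder_def split: if_splits)
  then have "cylinder P = cyl ?s" by (simp add: cyl_eq_cylinder_graph)
  moreover have "|dom ?s| <o |K|"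
    using card_of_Domain_ordLeq assms ordLeq_ordLess_trans by (fastforce simp: dom_def)
  ultimately show ?thesis
    unfolding box_top_def by (auto intro: topology_generated_by_Basis)
qed simp

lemma topspace_box_top:
  assumes "K \<noteq> {}"
  shows "topspace (box_top K) = UNIV"
proof -
  have "|{} :: ('m \<times> bool) set| <o |K|"
    using assms card_of_empty3 not_ordLeq_iff_ordLess[OF card_of_Well_order card_of_Well_order]
    by blast
  then have "openin (box_top K) (cylinder ({} :: ('m \<times> bool) set))"
    by (rule openin_box_top_cylinder)
  then show ?thesis by (auto simp: cylinder_def dest: openin_subset)
qed

lemma box_top_cylinder_nbhd:
  assumes K: "Cinfinite |K|" and "openin (box_top K) U" and "g \<in> U"
  shows "\<exists>P. |P| <o |K| \<and> g \<in> cylinder P \<and> cylinder P \<subseteq> U"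
proof -
  have "generate_topology_on {cyl s | s. |dom s| <o |K|} U"
    using assms(2) unfolding box_top_def by (rule openin_topology_generated_by)
  then show ?thesis using \<open>g \<in> U\<close>
  proof (induction arbitrary: g)
    case (Int U V)
    then obtain P Q where "|P| <o |K|" "g \<in> cylinder P" "cylinder P \<subseteq> U"
      and "|Q| <o |K|" "g \<in> cylinder Q" "cylinder Q \<subseteq> V" by blast
    moreover have "|P \<union> Q| <o |K|"
      using K \<open>|P| <o |K|\<close> \<open>|Q| <o |K|\<close> card_of_Un_ordLess_infinite
      by (auto simp: cinfinite_def Field_card_of)
    ultimately show ?case by (intro exI[of _ "P \<union> Q"]) (auto simp: cylinder_Un)
  next
    case (Basis s)
    then obtain t where t: "s = cyl t" "|dom t| <o |K|" by blast
    have "|Map.graph t| \<le>o |dom t|"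
      unfolding graph_eq_to_snd_dom by (rule card_of_image)
    then have "|Map.graph t| <o |K|" using t(2) by (rule ordLeq_ordLess_trans)
    then show ?case using Basis.prems t(1) by (auto simp: cyl_eq_cylinder_graph)
  qed blast+
qed

lemma nowhere_dense_in_iff:
  "nowhere_dense_in X N \<longleftrightarrow> N \<subseteq> topspace X \<and>
     (\<forall>U. openin X U \<and> U \<noteq> {} \<longrightarrow> (\<exists>V. openin X V \<and> V \<noteq> {} \<and> V \<subseteq> U \<and> V \<inter> N = {}))"
proof -
  have "X interior_of (X closure_of N) = {} \<longleftrightarrow>
      (\<forall>U. openin X U \<and> U \<noteq> {} \<longrightarrow> (\<exists>V. openin X V \<and> V \<noteq> {} \<and> V \<subseteq> U \<and> V \<inter> N = {}))"
  proof (intro iffI allI impI)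
    fix U assume "X interior_of (X closure_of N) = {}" and U: "openin X U \<and> U \<noteq> {}"
    then have "U - X closure_of N \<noteq> {}"
      using interior_of_maximal[of U "X closure_of N" X] by blast
    moreover have "openin X (U - X closure_of N)"
      using U by (simp add: openin_diff)
    moreover have "(U - X closure_of N) \<inter> N = {}"
      using closure_of_subset_Int[of X N] openin_subset[of X U] U by blast
    ultimately show "\<exists>V. openin X V \<and> V \<noteq> {} \<and> V \<subseteq> U \<and> V \<inter> N = {}"
      by blast
  next
    assume V: "\<forall>U. openin X U \<and> U \<noteq> {} \<longrightarrow> (\<exists>V. openin X V \<and> V \<noteq> {} \<and> V \<subseteq> U \<and> V \<inter> N = {})"
    show "X interior_of (X closure_of N) = {}"
      unfolding interior_of_eq_empty
    proof safe
      fix U x assume "openin X U" "U \<subseteq> X closure_of N" "x \<in> U"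
      then obtain V where "openin X V" "V \<noteq> {}" "V \<subseteq> U" "V \<inter> N = {}" using V by blast
      then have "V \<inter> X closure_of N = {}" by (simp add: openin_Int_closure_of_eq_empty)
      then show "x \<in> {}" using \<open>V \<noteq> {}\<close> \<open>V \<subseteq> U\<close> \<open>U \<subseteq> X closure_of N\<close> by blast
    qed
  qed
  then show ?thesis unfolding nowhere_dense_in_def by blast
qed

lemma nowhere_dense_in_box_top_iff:
  fixes N :: "('m \<Rightarrow> bool) set"
  assumes K: "Cinfinite |K|"
  shows "nowhere_dense_in (box_top K) N \<longleftrightarrow>
    (\<forall>P. single_valued P \<and> |P| <o |K| \<longrightarrow>
       (\<exists>Q. P \<subseteq> Q \<and> single_valued Q \<and> |Q| <o |K| \<and> cylinder Q \<inter> N = {}))"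
proof -
  have infK: "infinite K" using K by (simp add: cinfinite_def Field_card_of)
  then have top: "topspace (box_top K) = UNIV" by (intro topspace_box_top) auto
  show ?thesis
    unfolding nowhere_dense_in_iff top
  proof (intro iffI allI impI; (elim conjE)?)
    fix P :: "('m \<times> bool) set"
    assume ND: "\<forall>U. openin (box_top K) U \<and> U \<noteq> {} \<longrightarrow>
        (\<exists>V. openin (box_top K) V \<and> V \<noteq> {} \<and> V \<subseteq> U \<and> V \<inter> N = {})"
      and P: "single_valued P" "|P| <o |K|"
    have "openin (box_top K) (cylinder P)" "cylinder P \<noteq> {}"
      using P openin_box_top_cylinder cylinder_nonempty_iff by blast+
    then obtain V where V: "openin (box_top K) V" "V \<noteq> {}" "V \<subseteq> cylinder P" "V \<inter> N = {}"
      using ND by blast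
    then obtain g where "g \<in> V" by blast
    then obtain Q where Q: "|Q| <o |K|" "g \<in> cylinder Q" "cylinder Q \<subseteq> V"
      using box_top_cylinder_nbhd[OF K V(1)] by blast
    have "cylinder (P \<union> Q) \<subseteq> V" "g \<in> cylinder (P \<union> Q)"
      using Q V \<open>g \<in> V\<close> by (auto simp: cylinder_Un)
    then have "single_valued (P \<union> Q)" "cylinder (P \<union> Q) \<inter> N = {}"
      using V(4) cylinder_nonempty_iff by blast+
    moreover have "|P \<union> Q| <o |K|" using card_of_Un_ordLess_infinite infK P(2) Q(1) by blast
    ultimately show "\<exists>Q'. P \<subseteq> Q' \<and> single_valued Q' \<and> |Q'| <o |K| \<and> cylinder Q' \<inter> N = {}"
      by blast
  next
    assume ext: "\<forall>P. single_valued P \<and> |P| <o |K| \<longrightarrow>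
        (\<exists>Q. P \<subseteq> Q \<and> single_valued Q \<and> |Q| <o |K| \<and> cylinder Q \<inter> N = {})"
    have "\<exists>V. openin (box_top K) V \<and> V \<noteq> {} \<and> V \<subseteq> U \<and> V \<inter> N = {}"
      if U: "openin (box_top K) U" "g \<in> U" for U g
    proof -
      obtain P where P: "|P| <o |K|" "g \<in> cylinder P" "cylinder P \<subseteq> U"
        using box_top_cylinder_nbhd[OF K U] by blast
      then have "single_valued P" using cylinder_nonempty_iff by blast
      then obtain Q where "P \<subseteq> Q" "single_valued Q" "|Q| <o |K|" "cylinder Q \<inter> N = {}"
        using ext P(1) by blast
      moreover from this have "openin (box_top K) (cylinder Q)" "cylinder Q \<noteq> {}"
        using openin_box_top_cylinder cylinder_nonempty_iff by blast+
      ultimately show ?thesis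
        using P(3) cylinder_antimono[of P Q] by blast
    qed
    then show "N \<subseteq> UNIV \<and> (\<forall>U. openin (box_top K) U \<and> U \<noteq> {} \<longrightarrow>
        (\<exists>V. openin (box_top K) V \<and> V \<noteq> {} \<and> V \<subseteq> U \<and> V \<inter> N = {}))"
      by blast
  qed
qed

lemma indistinguishable_coordinates:
  fixes Y :: "('m \<Rightarrow> bool) set"
  assumes inf: "infinite (UNIV :: 'm set)"
    and D: "|D| <o |UNIV :: 'm set|" and Y: "|Pow Y| <o |UNIV :: 'm set|"
  shows "\<exists>a b. a \<notin> D \<and> b \<notin> D \<and> a \<noteq> b \<and> (\<forall>y\<in>Y. y a = y b)"
proof (rule ccontr)
  assume none: "\<nexists>a b. a \<notin> D \<and> b \<notin> D \<and> a \<noteq> b \<and> (\<forall>y\<in>Y. y a = y b)"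
  have "inj_on (\<lambda>a. {y \<in> Y. y a}) (- D)"
  proof (rule inj_onI)
    fix a b assume "a \<in> - D" "b \<in> - D" "{y \<in> Y. y a} = {y \<in> Y. y b}"
    then show "a = b" using none by (auto simp: set_eq_iff)
  qed
  then have "|- D| \<le>o |Pow Y|" by (rule card_of_ordLeqI) auto
  then have "|- D| <o |UNIV :: 'm set|" using Y by (rule ordLeq_ordLess_trans)
  then have "|D \<union> - D| <o |UNIV :: 'm set|" using card_of_Un_ordLess_infinite[OF inf D] by blast
  then show False by (simp add: ordLess_irreflexive)
qed

lemma card_of_insert_ordLess_infinite:
  assumes "infinite B" "|A| <o |B|"
  shows "|insert a A| <o |B|"
proof -
  have "|{a}| <o |B|"
    using finite_ordLess_infinite[OF card_of_Well_order card_of_Well_order, of "{a}" B] assms(1)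
    by (simp add: Field_card_of)
  then show ?thesis using card_of_Un_ordLess_infinite[OF assms(1) _ assms(2)] by (metis insert_is_Un)
qed

lemma nowhere_dense_if_Pow_small:
  fixes Y :: "('m \<Rightarrow> bool) set"
  assumes K: "Cinfinite |K|" and KM: "|K| \<le>o |UNIV :: 'm set|"
    and Y: "|Pow Y| <o |UNIV :: 'm set|"
  shows "nowhere_dense_in (box_top K) Y"
  unfolding nowhere_dense_in_box_top_iff[OF K]
proof (intro allI impI, elim conjE)
  fix P :: "('m \<times> bool) set" assume P: "single_valued P" "|P| <o |K|"
  have infK: "infinite K" using K by (simp add: cinfinite_def Field_card_of)
  then have inf: "infinite (UNIV :: 'm set)" using card_of_ordLeq_finite[OF KM] by blast
  have "|Domain P| <o |UNIV :: 'm set|"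
    using ordLeq_ordLess_trans[OF card_of_Domain_ordLeq ordLess_ordLeq_trans[OF P(2) KM]] .
  from indistinguishable_coordinates[OF inf this Y] obtain a b
    where ab: "a \<notin> Domain P" "b \<notin> Domain P" "a \<noteq> b" "\<forall>y\<in>Y. y a = y b"
    by iprover
  let ?Q = "insert (a, True) (insert (b, False) P)"
  have "single_valued ?Q"
  proof (rule single_valuedI)
    fix x y z assume "(x, y) \<in> ?Q" "(x, z) \<in> ?Q"
    then show "y = z" using P(1) ab(1-3) by (blast dest: single_valuedD)
  qed
  moreover have "|?Q| <o |K|" using P(2) infK by (intro card_of_insert_ordLess_infinite)
  moreover have "g a \<and> \<not> g b" if "g \<in> cylinder ?Q" for g
    using that by (simp add: cylinder_insert)
  then have "cylinder ?Q \<inter> Y = {}" using ab(4) by blast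
  moreover have "P \<subseteq> ?Q" by blast
  ultimately show "\<exists>Q. P \<subseteq> Q \<and> single_valued Q \<and> |Q| <o |K| \<and> cylinder Q \<inter> Y = {}"
    by blast
qed

lemma card_of_Pow_mono:
  assumes "|A| \<le>o |B|"
  shows "|Pow A| \<le>o |Pow B|"
proof -
  obtain f where f: "inj_on f A" "f ` A \<subseteq> B" using assms card_of_ordLeq[of A B] by blast
  have "inj_on (image f) (Pow A)" using f(1) by (rule inj_on_image_Pow)
  moreover have "image f ` Pow A \<subseteq> Pow B" using f(2) by blast
  ultimately show ?thesis using card_of_ordLeq[of "Pow A" "Pow B"] by blast
qed

lemma kmeagre_if_nowhere_dense:
  assumes "K \<noteq> {}" "nowhere_dense_in X N"
  shows "kmeagre K X N"
  unfolding kmeagre_def using card_of_singl_ordLeq[OF assms(1)] assms(2)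
  by (intro exI[of _ "{N}"]) simp

lemma kmeagre_if_strong_limit:
  fixes Y :: "('m \<Rightarrow> bool) set"
  assumes K: "Cinfinite |K|" and KM: "|K| \<le>o |UNIV :: 'm set|"
    and A: "cofinal A |UNIV :: 'm set|" "|A| \<le>o |K|"
    and strong_limit: "\<And>X :: 'm set. |X| <o |UNIV :: 'm set| \<Longrightarrow> |Pow X| <o |UNIV :: 'm set|"
    and Y: "|Y| \<le>o |UNIV :: 'm set|"
  shows "kmeagre K (box_top K) Y"
proof -
  obtain h :: "('m \<Rightarrow> bool) \<Rightarrow> 'm" where h: "inj_on h Y"
    using Y card_of_ordLeq[of Y "UNIV :: 'm set"] by blast
  define Y_below where "Y_below a = {y \<in> Y. h y \<in> underS |UNIV :: 'm set| a}" for a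
  have "nowhere_dense_in (box_top K) (Y_below a)" for a
  proof (rule nowhere_dense_if_Pow_small[OF K KM])
    have "|Y_below a| \<le>o |underS |UNIV :: 'm set| a|"
      using h by (intro card_of_ordLeqI[of h]) (auto simp: Y_below_def inj_on_def)
    moreover have "|underS |UNIV :: 'm set| a| <o |UNIV :: 'm set|"
      using card_of_underS[OF card_of_Card_order, of a "UNIV :: 'm set"] by (simp add: Field_card_of)
    ultimately have "|Pow (Y_below a)| \<le>o |Pow (underS |UNIV :: 'm set| a)|"
      "|Pow (underS |UNIV :: 'm set| a)| <o |UNIV :: 'm set|"
      by (auto intro: card_of_Pow_mono strong_limit)
    then show "|Pow (Y_below a)| <o |UNIV :: 'm set|" by (rule ordLeq_ordLess_trans)
  qed
  moreover have "|Y_below ` A| \<le>o |K|" using card_of_image A(2) by (rule ordLeq_transitive)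
  moreover have "y \<in> \<Union>(Y_below ` A)" if "y \<in> Y" for y
  proof -
    obtain b where "b \<in> A" "h y \<noteq> b" "(h y, b) \<in> |UNIV :: 'm set|"
      using A(1) unfolding cofinal_def Field_card_of by blast
    then show ?thesis using that unfolding Y_below_def underS_def by blast
  qed
  then have "Y = \<Union>(Y_below ` A)" by (auto simp: Y_below_def)
  ultimately show ?thesis unfolding kmeagre_def by blast
qed

lemma worec_union_stages:
  fixes ext :: "'k \<Rightarrow> 'c set \<Rightarrow> 'c set"
  assumes wo: "Well_order r" and ext_sub: "\<And>k A. A \<subseteq> ext k A"
  defines "t \<equiv> wo_rel.worec r (\<lambda>t k. ext k (\<Union>j \<in> underS r k. t j))"
  shows worec_union_stages_eq: "t k = ext k (\<Union>j \<in> underS r k. t j)"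
    and worec_union_stages_chain: "i \<in> Field r \<Longrightarrow> j \<in> Field r \<Longrightarrow> t i \<subseteq> t j \<or> t j \<subseteq> t i"
proof -
  have wo_rel: "wo_rel r" using wo by (simp add: wo_rel_def)
  show t_rec: "t k = ext k (\<Union>j \<in> underS r k. t j)" for k
    using wo_rel.worec_fixpoint[OF wo_rel, of "\<lambda>t k. ext k (\<Union>j \<in> underS r k. t j)"]
    unfolding t_def wo_rel.adm_wo_def[OF wo_rel] by (metis (no_types, lifting) SUP_cong)
  assume "i \<in> Field r" "j \<in> Field r"
  then have "i = j \<or> i \<in> underS r j \<or> j \<in> underS r i"
    using wo_rel.TOTALS[OF wo_rel] by (auto simp: underS_def)
  then show "t i \<subseteq> t j \<or> t j \<subseteq> t i" using ext_sub t_rec by blast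
qed

lemma regular_fusion:
  fixes K :: "'k set" and R :: "'k \<Rightarrow> ('a \<times> 'b) set \<Rightarrow> bool"
  assumes K: "Cinfinite |K|" "regularCard |K|"
    and extend: "\<And>k P. k \<in> K \<Longrightarrow> single_valued P \<Longrightarrow> |P| <o |K| \<Longrightarrow>
      \<exists>Q. P \<subseteq> Q \<and> single_valued Q \<and> |Q| <o |K| \<and> R k Q"
  shows "\<exists>P. single_valued P \<and> |P| \<le>o |K| \<and> (\<forall>k\<in>K. \<exists>Q \<subseteq> P. R k Q)"
proof -
  let ?r = "|K|"
  have wo: "wo_rel ?r" unfolding wo_rel_def by (rule card_of_Well_order)
  have infK: "infinite K" using K(1) by (simp add: cinfinite_def Field_card_of)
  have stable: "stable ?r"
    using regularCard_stable[OF card_of_Card_order _ K(2)] infK by (simp add: Field_card_of)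
  have "\<forall>k P. \<exists>Q. P \<subseteq> Q \<and>
      (k \<in> K \<and> single_valued P \<and> |P| <o |K| \<longrightarrow> single_valued Q \<and> |Q| <o |K| \<and> R k Q)"
  proof (intro allI)
    fix k P
    show "\<exists>Q. P \<subseteq> Q \<and>
      (k \<in> K \<and> single_valued P \<and> |P| <o |K| \<longrightarrow> single_valued Q \<and> |Q| <o |K| \<and> R k Q)"
      using extend[of k P] by (cases "k \<in> K \<and> single_valued P \<and> |P| <o |K|") auto
  qed
  then obtain ext where ext_sub: "\<And>k P. P \<subseteq> ext k P"
    and ext: "\<And>k P. k \<in> K \<Longrightarrow> single_valued P \<Longrightarrow> |P| <o |K| \<Longrightarrow>
      single_valued (ext k P) \<and> |ext k P| <o |K| \<and> R k (ext k P)"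
    by metis
  \<comment> \<open>Stage k extends the union of all earlier stages; by regularity that union is still a
    condition of size less than K.\<close>
  define t where "t = wo_rel.worec ?r (\<lambda>t k. ext k (\<Union>j \<in> underS ?r k. t j))"
  have t_rec: "t k = ext k (\<Union>j \<in> underS ?r k. t j)" for k
    unfolding t_def by (rule worec_union_stages_eq[OF card_of_Well_order ext_sub])
  have chain: "t i \<subseteq> t j \<or> t j \<subseteq> t i" if "i \<in> K" "j \<in> K" for i j
    using that unfolding t_def
    by (intro worec_union_stages_chain[OF card_of_Well_order ext_sub]) (simp_all add: Field_card_of)
  have union_single_valued: "single_valued (\<Union>j \<in> S. t j)"
    if "S \<subseteq> K" "\<And>j. j \<in> S \<Longrightarrow> single_valued (t j)" for S
  proof (rule single_valued_Union_chain)
    fix P Q assume "P \<in> t ` S" "Q \<in> t ` S"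
    then show "P \<subseteq> Q \<or> Q \<subseteq> P" using chain that(1) by blast
  qed (use that in auto)
  have stage: "k \<in> K \<longrightarrow> single_valued (t k) \<and> |t k| <o |K| \<and> R k (t k)" for k
  proof (induct k rule: wo_rel.well_order_induct[OF wo])
    case (1 k)
    show ?case
    proof
      assume k: "k \<in> K"
      have below: "underS ?r k \<subseteq> K"
        using Order_Relation.underS_Field[of ?r k] by (simp add: Field_card_of)
      then have IH: "single_valued (t j) \<and> |t j| <o |K|" if "j \<in> underS ?r k" for j
        using 1 that by (auto simp: underS_def)
      have "|underS ?r k| <o |K|"
        using card_of_underS[OF card_of_Card_order, of k K] k by (simp add: Field_card_of)
      then have "|\<Union>j \<in> underS ?r k. t j| <o |K|" using IH by (intro stable_UNION[OF stable]) auto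
      moreover have "single_valued (\<Union>j \<in> underS ?r k. t j)"
        using union_single_valued[OF below] IH by blast
      ultimately show "single_valued (t k) \<and> |t k| <o |K| \<and> R k (t k)"
        using ext[OF k] t_rec[of k] by simp
    qed
  qed
  have "single_valued (\<Union>k \<in> K. t k)" using union_single_valued stage by blast
  moreover have "|\<Union>k \<in> K. t k| \<le>o |K|"
    using stage
    by (intro card_of_UNION_ordLeq_infinite[OF infK ordLeq_refl[OF card_of_Card_order]])
      (auto intro: ordLess_imp_ordLeq)
  moreover have "\<forall>k\<in>K. \<exists>Q \<subseteq> (\<Union>k \<in> K. t k). R k Q" using stage by blast
  ultimately show ?thesis by blast
qed

lemma cylinder_avoiding_kmeagre:
  fixes Y :: "('m \<Rightarrow> bool) set"
  assumes K: "Cinfinite |K|" "regularCard |K|" and "kmeagre K (box_top K) Y"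
  shows "\<exists>P. single_valued P \<and> |P| \<le>o |K| \<and> cylinder P \<inter> Y = {}"
proof -
  obtain \<N> where \<N>: "|\<N>| \<le>o |K|" "\<forall>N\<in>\<N>. nowhere_dense_in (box_top K) N" "Y = \<Union>\<N>"
    using assms(3) unfolding kmeagre_def by blast
  show ?thesis
  proof (cases "\<N> = {}")
    case True
    then show ?thesis by (intro exI[of _ "{}"]) (simp add: \<N>(3) card_of_empty)
  next
    case False
    then obtain F where F: "F ` K = \<N>" using \<N>(1) card_of_ordLeq2 by metis
    have "\<exists>P. single_valued P \<and> |P| \<le>o |K| \<and> (\<forall>k\<in>K. \<exists>Q \<subseteq> P. cylinder Q \<inter> F k = {})"
    proof (rule regular_fusion[OF K])
      fix k and P :: "('m \<times> bool) set" assume "k \<in> K" "single_valued P" "|P| <o |K|"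
      then show "\<exists>Q. P \<subseteq> Q \<and> single_valued Q \<and> |Q| <o |K| \<and> cylinder Q \<inter> F k = {}"
        using \<N>(2) F nowhere_dense_in_box_top_iff[OF K(1)] by blast
    qed
    then show ?thesis using cylinder_antimono F \<N>(3) by blast
  qed
qed

lemma not_kmeagre_if_independent_family:
  fixes K :: "'k set" and L :: "'l set" and \<X> :: "'l set set"
  assumes K: "Cinfinite |K|" "regularCard |K|"
    and size: "|UNIV :: 'm set| \<le>o |\<X>|"
    and indep: "\<And>\<A> \<B>. \<A> \<subseteq> \<X> \<Longrightarrow> \<B> \<subseteq> \<X> \<Longrightarrow> \<A> \<inter> \<B> = {} \<Longrightarrow> |\<A>| \<le>o |K| \<Longrightarrow> |\<B>| \<le>o |K| \<Longrightarrow>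
      L \<inter> \<Inter>\<A> - \<Union>\<B> \<noteq> {}"
  shows "\<exists>Y :: ('m \<Rightarrow> bool) set. |Y| \<le>o |L| \<and> \<not> kmeagre K (box_top K) Y"
proof -
  obtain h :: "'m \<Rightarrow> 'l set" where h: "inj h" "range h \<subseteq> \<X>"
    using size card_of_ordLeq[of "UNIV :: 'm set" \<X>] by blast
  define Y where "Y = (\<lambda>\<xi> \<alpha>. \<xi> \<in> h \<alpha>) ` L"
  have "\<not> kmeagre K (box_top K) Y"
  proof
    assume "kmeagre K (box_top K) Y"
    then obtain P where P: "single_valued P" "|P| \<le>o |K|" "cylinder P \<inter> Y = {}"
      using cylinder_avoiding_kmeagre[OF K] by blast
    define \<A> where "\<A> b = h ` {\<alpha>. (\<alpha>, b) \<in> P}" for b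
    have small: "|\<A> b| \<le>o |K|" for b
    proof -
      have "|{\<alpha>. (\<alpha>, b) \<in> P}| \<le>o |P|" by (rule card_of_ordLeqI[of "\<lambda>\<alpha>. (\<alpha>, b)"]) (auto simp: inj_on_def)
      then show ?thesis
        unfolding \<A>_def using ordLeq_transitive[OF card_of_image ordLeq_transitive[OF _ P(2)]] by blast
    qed
    have disjoint: "\<A> True \<inter> \<A> False = {}"
    proof -
      have "False" if "(\<alpha>, True) \<in> P" "(\<beta>, False) \<in> P" "h \<alpha> = h \<beta>" for \<alpha> \<beta>
        using that h(1) single_valuedD[OF P(1)] unfolding inj_def by blast
      then show ?thesis unfolding \<A>_def by blast
    qed
    have sub: "\<A> b \<subseteq> \<X>" for b using h(2) by (auto simp: \<A>_def)
    obtain \<xi> where \<xi>: "\<xi> \<in> L" "\<forall>A \<in> \<A> True. \<xi> \<in> A" "\<forall>A \<in> \<A> False. \<xi> \<notin> A"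
      using indep[OF sub sub disjoint small small] by blast
    have "(\<lambda>\<alpha>. \<xi> \<in> h \<alpha>) \<in> cylinder P"
      unfolding cylinder_def
    proof (intro CollectI allI impI)
      fix \<alpha> b assume "(\<alpha>, b) \<in> P"
      then show "(\<xi> \<in> h \<alpha>) = b" using \<xi>(2,3) unfolding \<A>_def by (cases b) auto
    qed
    moreover have "(\<lambda>\<alpha>. \<xi> \<in> h \<alpha>) \<in> Y" using \<xi>(1) by (simp add: Y_def)
    ultimately show False using P(3) by blast
  qed
  moreover have "|Y| \<le>o |L|" unfolding Y_def by (rule card_of_image)
  ultimately show ?thesis by blast
qed

theorem mainTheorem13:
  fixes K :: "'k set" and M :: "'m set" and L :: "'l set"
  assumes M_univ: "M = (UNIV :: 'm set)"
    and kappa_reg: "Cinfinite |K|" "regularCard |K|"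
    and mu_sing: "Cinfinite |M|" "\<not> regularCard |M|"
    and cof: "cof_is |M| K"
  shows
   "( |L| <o |Pow L| \<and> |Pow L| <o |M| \<longrightarrow>
        (\<forall>Y \<subseteq> topspace (box_top K :: ('m \<Rightarrow> bool) topology).
            |Y| \<le>o |L| \<longrightarrow> kmeagre K (box_top K) Y))
  \<and> ((\<forall>X :: 'm set. |X| <o |M| \<longrightarrow> |Pow X| <o |M| ) \<longrightarrow>
        (\<forall>Y \<subseteq> topspace (box_top K :: ('m \<Rightarrow> bool) topology).
            |Y| \<le>o |M| \<longrightarrow> kmeagre K (box_top K) Y))
  \<and> (Cinfinite |L| \<and> regularCard |L| \<and> |K| <o |L| \<and> |L| <o |M| \<and> |M| \<le>o |Pow L| \<and>
     (\<exists>\<X>. \<X> \<subseteq> {A. A \<subseteq> L \<and> |A| =o |L|} \<and> |\<X>| =o |M| \<and>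
        (\<forall>\<A> \<B>. \<A> \<subseteq> \<X> \<and> \<B> \<subseteq> \<X> \<and> \<A> \<inter> \<B> = {} \<and> |\<A>| \<le>o |K| \<and> |\<B>| \<le>o |K| \<longrightarrow>
             |(L \<inter> \<Inter>\<A>) - \<Union>\<B>| =o |L| ))
     \<longrightarrow> (\<exists>Y \<subseteq> topspace (box_top K :: ('m \<Rightarrow> bool) topology).
            |Y| \<le>o |L| \<and> \<not> kmeagre K (box_top K) Y))"
proof -
  have "K \<noteq> {}" using kappa_reg(1) by (auto simp: cinfinite_def Field_card_of)
  then have top: "topspace (box_top K :: ('m \<Rightarrow> bool) topology) = UNIV"
    by (rule topspace_box_top)
  obtain A where A: "cofinal A |UNIV :: 'm set|" "|A| =o |K|"
    using cof unfolding cof_is_def M_univ by blast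
  then have KM: "|K| \<le>o |UNIV :: 'm set|"
    using ordIso_ordLeq_trans[OF ordIso_symmetric card_of_mono1[OF subset_UNIV]] by blast
  have part1: "kmeagre K (box_top K) Y"
    if "|Pow L| <o |M|" "|Y| \<le>o |L|" for Y :: "('m \<Rightarrow> bool) set"
  proof (rule kmeagre_if_nowhere_dense[OF \<open>K \<noteq> {}\<close> nowhere_dense_if_Pow_small[OF kappa_reg(1) KM]])
    show "|Pow Y| <o |UNIV :: 'm set|"
      using ordLeq_ordLess_trans[OF card_of_Pow_mono[OF that(2)] that(1)] unfolding M_univ .
  qed
  have part2: "kmeagre K (box_top K) Y"
    if "\<forall>X :: 'm set. |X| <o |M| \<longrightarrow> |Pow X| <o |M|" "|Y| \<le>o |M|" for Y :: "('m \<Rightarrow> bool) set"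
    using kmeagre_if_strong_limit[OF kappa_reg(1) KM A(1) ordIso_imp_ordLeq[OF A(2)]] that
    unfolding M_univ by blast
  have part3: "\<exists>Y :: ('m \<Rightarrow> bool) set. |Y| \<le>o |L| \<and> \<not> kmeagre K (box_top K) Y"
    if "L \<noteq> {}" "|\<X>| =o |M|" and indep: "\<forall>\<A> \<B>. \<A> \<subseteq> \<X> \<and> \<B> \<subseteq> \<X> \<and> \<A> \<inter> \<B> = {} \<and>
        |\<A>| \<le>o |K| \<and> |\<B>| \<le>o |K| \<longrightarrow> |(L \<inter> \<Inter>\<A>) - \<Union>\<B>| =o |L|" for \<X> :: "'l set set"
  proof (rule not_kmeagre_if_independent_family[OF kappa_reg])
    show "|UNIV :: 'm set| \<le>o |\<X>|"
      using ordIso_imp_ordLeq[OF ordIso_symmetric[OF that(2)]] unfolding M_univ .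
    \<comment> \<open>Besides L \<noteq> {}, only the independence of \<X> is used.\<close>
    fix \<A> \<B> assume "\<A> \<subseteq> \<X>" "\<B> \<subseteq> \<X>" "\<A> \<inter> \<B> = {}" "|\<A>| \<le>o |K|" "|\<B>| \<le>o |K|"
    then have "|L| \<le>o |L \<inter> \<Inter>\<A> - \<Union>\<B>|"
      using indep ordIso_iff_ordLeq by blast
    then show "L \<inter> \<Inter>\<A> - \<Union>\<B> \<noteq> {}" using \<open>L \<noteq> {}\<close> card_of_empty3 by fastforce
  qed
  have "Cinfinite |L| \<Longrightarrow> L \<noteq> {}" by (auto simp: cinfinite_def Field_card_of)
  then show ?thesis using part1 part2 part3 by (auto simp: top)
qed

end
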